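(* Let $(V,\phi)$ be a unitary vertex operator superalgebra. Then $V$ is self-dual, i.e. $V$ is isomorphic, as a $V$-module, to its contragredient module $V'$.
   Context: A vertex operator superalgebra (VOSA) $(V,Y,\mathbf 1,\omega)$ is a $\mathbb Z_2$-graded space $V=V_{\bar0}\oplus V_{\bar1}$ with vertex operators $Y(v,z)=\sum v_nz^{-n-1}$, vacuum $\mathbf 1$ and conformal vector $\omega$ with $L(n)=\omega_{n+1}$ satisfying the Virasoro relations, the $L(-1)$-derivative property, a grading $V=\bigoplus_{n\in\frac12\mathbb Z}V_n$ ($V_{\bar0}$ = integer weights, $V_{\bar1}$ = half-odd weights, $L(0)|_{V_n}=n$, finite-dimensional, zero for $n\ll0$), truncation, vacuum and creation axioms, and the super Jacobi identity with sign $(-1)^{[u][v]}$. An anti-linear involution $\phi$ of $V$ is an anti-linear bijection of order 2 with $\phi(\mathbf 1)=\mathbf 1$, $\phi(\omega)=\omega$, $\phi(u_nv)=\phi(u)_n\phi(v)$. $(V,\phi)$ is unitary if there is a positive definite Hermitian form $(\,,)$ on $V$ with $(Y(e^{zL(1)}(-1)^{L(0)+2L(0)^2}z^{-2L(0)}a,z^{-1})u,v)=(u,Y(\phi(a),z)v)$ for all $a,u,v\in V$. For a $V$-module $M=\bigoplus_{\lambda\in\mathbb C}M_\lambda$ (graded by $L(0)$-eigenvalues), the contragredient module is $M'=\bigoplus_\lambda M_\lambda^*$ with $\langle Y'(a,z)w',w\rangle=\langle w',Y(e^{zL(1)}(-1)^{L(0)+2L(0)^2}z^{-2L(0)}a,z^{-1})w\rangle$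 for $a\in V$, $w\in M$, $w'\in M'$. *)

theory Defs
  imports Complex_Main "HOL-Library.Groups_Big_Fun"
begin

text \<open>
  The vertex operator Y(u,z) = sum_n u_n z^(-n-1) is given by its modes
  Y u n v = u_n v  (n an integer).  Weights lie in (1/2)Z; the weight-(k/2) space is
  indexed by the integer k.
\<close>

definition Lop :: "('v \<Rightarrow> int \<Rightarrow> 'v \<Rightarrow> 'v) \<Rightarrow> 'v \<Rightarrow> int \<Rightarrow> 'v \<Rightarrow> 'v" where
  "Lop Y om n = Y om (n + 1)"

definition wsp :: "(complex \<Rightarrow> 'v \<Rightarrow> 'v) \<Rightarrow> ('v \<Rightarrow> int \<Rightarrow> 'v \<Rightarrow> 'v) \<Rightarrow> 'v \<Rightarrow> int \<Rightarrow> 'v set" where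
  "wsp smul Y om k = {v. Lop Y om 0 v = smul (of_int k / 2) v}"

text \<open>Parity: p = 0 means v lies in V_0bar (sum of integer-weight spaces),
  p = 1 means v lies in V_1bar (sum of half-odd-weight spaces).\<close>
definition parity_hom :: "(complex \<Rightarrow> 'v \<Rightarrow> 'v::ab_group_add) \<Rightarrow> ('v \<Rightarrow> int \<Rightarrow> 'v \<Rightarrow> 'v) \<Rightarrow> 'v \<Rightarrow> int \<Rightarrow> 'v \<Rightarrow> bool" where
  "parity_hom smul Y om p v \<longleftrightarrow>
     (\<exists>K c. finite K \<and> (\<forall>k\<in>K. k mod 2 = p \<and> c k \<in> wsp smul Y om k) \<and> v = (\<Sum>k\<in>K. c k))"

definition VOSA :: "(complex \<Rightarrow> 'v \<Rightarrow> 'v::ab_group_add) \<Rightarrow> ('v \<Rightarrow> int \<Rightarrow> 'v \<Rightarrow> 'v) \<Rightarrow> 'v \<Rightarrow> 'v \<Rightarrow> bool" where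
  "VOSA smul Y vac om \<longleftrightarrow>
     vector_space smul
     \<comment> \<open>vertex operators are bilinear\<close>
   \<and> (\<forall>a b n v. Y (a + b) n v = Y a n v + Y b n v)
   \<and> (\<forall>c a n v. Y (smul c a) n v = smul c (Y a n v))
   \<and> (\<forall>a n u v. Y a n (u + v) = Y a n u + Y a n v)
   \<and> (\<forall>a n c v. Y a n (smul c v) = smul c (Y a n v))
     \<comment> \<open>Virasoro relations with some central charge\<close>
   \<and> (\<exists>cc::complex. \<forall>m n v.
        Lop Y om m (Lop Y om n v) - Lop Y om n (Lop Y om m v)
        = smul (of_int (m - n)) (Lop Y om (m + n) v)
          + (if m + n = 0 then smul ((of_int m ^ 3 - of_int m) / 12 * cc) v else 0))
     \<comment> \<open>L(-1)-derivative property: Y(L(-1)u,z) = d/dz Y(u,z)\<close>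
   \<and> (\<forall>u n v. Y (Lop Y om (-1) u) n v = smul (- of_int n) (Y u (n - 1) v))
     \<comment> \<open>grading: V = direct sum of V_{k/2}, k integer\<close>
   \<and> (\<forall>v. \<exists>K c. finite K \<and> (\<forall>k\<in>K. c k \<in> wsp smul Y om k) \<and> v = (\<Sum>k\<in>K. c k))
   \<and> (\<forall>k. \<exists>B. finite B \<and> wsp smul Y om k \<subseteq> module.span smul B)
   \<and> (\<exists>k0. \<forall>k<k0. wsp smul Y om k = {0})
     \<comment> \<open>truncation\<close>
   \<and> (\<forall>u v. \<exists>N. \<forall>n\<ge>N. Y u n v = 0)
     \<comment> \<open>vacuum axiom: Y(1,z) = id\<close>
   \<and> (\<forall>n v. Y vac n v = (if n = -1 then v else 0))
     \<comment> \<open>creation axiom\<close>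
   \<and> (\<forall>u n. n \<ge> 0 \<longrightarrow> Y u n vac = 0)
   \<and> (\<forall>u. Y u (-1) vac = u)
     \<comment> \<open>super Jacobi identity, in component (Borcherds) form\<close>
   \<and> (\<forall>u v w p q m n l. parity_hom smul Y om p u \<longrightarrow> parity_hom smul Y om q v \<longrightarrow>
        Sum_any (\<lambda>i::nat. smul (of_int m gchoose i) (Y (Y u (l + int i) v) (m + n - int i) w))
      = Sum_any (\<lambda>i::nat. smul ((-1) ^ i * (of_int l gchoose i))
            (Y u (m + l - int i) (Y v (n + int i) w)
             - smul ((-1) ^ nat \<bar>l\<bar> * (-1) ^ nat (p * q)) (Y v (n + l - int i) (Y u (m + int i) w)))))"

text \<open>For a of weight k/2, the z^(-n-1) coefficient of
  Y(e^{zL(1)} (-1)^{L(0)+2L(0)^2} z^{-2L(0)} a, z^{-1}) applied to w.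
  Here (-1)^{h+2h^2} with h = k/2 equals (-1)^{k(k+1)/2}, and the coefficient is
  sum_j (-1)^{k(k+1)/2}/j! (L(1)^j a)_{k-n-2-j} w.\<close>
definition opp_mode :: "(complex \<Rightarrow> 'v \<Rightarrow> 'v::ab_group_add) \<Rightarrow> ('v \<Rightarrow> int \<Rightarrow> 'v \<Rightarrow> 'v) \<Rightarrow> 'v \<Rightarrow> 'v \<Rightarrow> int \<Rightarrow> int \<Rightarrow> 'v \<Rightarrow> 'v" where
  "opp_mode smul Y om a k n w =
     Sum_any (\<lambda>j::nat. smul ((-1) ^ nat (k * (k + 1) div 2) / of_nat (fact j))
                       (Y ((Lop Y om 1 ^^ j) a) (k - n - 2 - int j) w))"

definition antilinear_involution :: "(complex \<Rightarrow> 'v \<Rightarrow> 'v::ab_group_add) \<Rightarrow> ('v \<Rightarrow> int \<Rightarrow> 'v \<Rightarrow> 'v) \<Rightarrow> 'v \<Rightarrow> 'v \<Rightarrow> ('v \<Rightarrow> 'v) \<Rightarrow> bool" where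
  "antilinear_involution smul Y vac om phi \<longleftrightarrow>
     (\<forall>a b. phi (a + b) = phi a + phi b)
   \<and> (\<forall>c a. phi (smul c a) = smul (cnj c) (phi a))
   \<and> (\<forall>a. phi (phi a) = a)
   \<and> phi vac = vac \<and> phi om = om
   \<and> (\<forall>u n v. phi (Y u n v) = Y (phi u) n (phi v))"

definition pos_def_hermitian :: "(complex \<Rightarrow> 'v \<Rightarrow> 'v::ab_group_add) \<Rightarrow> ('v \<Rightarrow> 'v \<Rightarrow> complex) \<Rightarrow> bool" where
  "pos_def_hermitian smul B \<longleftrightarrow>
     (\<forall>u v w. B (u + v) w = B u w + B v w)
   \<and> (\<forall>c u w. B (smul c u) w = c * B u w)
   \<and> (\<forall>u v. B v u = cnj (B u v))
   \<and> (\<forall>v. v \<noteq> 0 \<longrightarrow> B v v \<in> \<real> \<and> Re (B v v) > 0)"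

definition unitary_VOSA :: "(complex \<Rightarrow> 'v \<Rightarrow> 'v::ab_group_add) \<Rightarrow> ('v \<Rightarrow> int \<Rightarrow> 'v \<Rightarrow> 'v) \<Rightarrow> 'v \<Rightarrow> 'v \<Rightarrow> ('v \<Rightarrow> 'v) \<Rightarrow> bool" where
  "unitary_VOSA smul Y vac om phi \<longleftrightarrow>
     VOSA smul Y vac om \<and> antilinear_involution smul Y vac om phi
   \<and> (\<exists>B. pos_def_hermitian smul B
        \<and> (\<forall>a k n u v. a \<in> wsp smul Y om k \<longrightarrow>
              B (opp_mode smul Y om a k n u) v = B u (Y (phi a) n v)))"

text \<open>The contragredient module V' = direct sum of the duals V_lambda^*, realised as the
  linear functionals on V vanishing on all but finitely many weight spaces.\<close>
definition contragredient :: "(complex \<Rightarrow> 'v \<Rightarrow> 'v::ab_group_add) \<Rightarrow> ('v \<Rightarrow> int \<Rightarrow> 'v \<Rightarrow> 'v) \<Rightarrow> 'v \<Rightarrow> ('v \<Rightarrow> complex) set" where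
  "contragredient smul Y om =
     {f. (\<forall>u v. f (u + v) = f u + f v) \<and> (\<forall>c u. f (smul c u) = c * f u)
       \<and> (\<exists>K. finite K \<and> (\<forall>k. k \<notin> K \<longrightarrow> (\<forall>v\<in>wsp smul Y om k. f v = 0)))}"

text \<open>Vertex operator of V' on a homogeneous a of weight k/2:
  <a'_n f, w> = <f, coefficient of z^(-n-1) in Y(e^{zL(1)}(-1)^{L(0)+2L(0)^2} z^{-2L(0)} a, z^{-1}) w>.\<close>
definition contra_mode :: "(complex \<Rightarrow> 'v \<Rightarrow> 'v::ab_group_add) \<Rightarrow> ('v \<Rightarrow> int \<Rightarrow> 'v \<Rightarrow> 'v) \<Rightarrow> 'v \<Rightarrow> 'v \<Rightarrow> int \<Rightarrow> int \<Rightarrow> ('v \<Rightarrow> complex) \<Rightarrow> ('v \<Rightarrow> complex)" where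
  "contra_mode smul Y om a k n f = (\<lambda>w. f (opp_mode smul Y om a k n w))"

definition self_dual :: "(complex \<Rightarrow> 'v \<Rightarrow> 'v::ab_group_add) \<Rightarrow> ('v \<Rightarrow> int \<Rightarrow> 'v \<Rightarrow> 'v) \<Rightarrow> 'v \<Rightarrow> bool" where
  "self_dual smul Y om \<longleftrightarrow>
     (\<exists>F :: 'v \<Rightarrow> ('v \<Rightarrow> complex).
        bij_betw F UNIV (contragredient smul Y om)
      \<and> (\<forall>u v w. F (u + v) w = F u w + F v w)
      \<and> (\<forall>c u w. F (smul c u) w = c * F u w)
      \<and> (\<forall>a k n u. a \<in> wsp smul Y om k \<longrightarrow>
            F (Y a n u) = contra_mode smul Y om a k n (F u)))"

end

theory Submission
  imports Defs
begin

text \<open>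
  The invariant form B identifies V with its contragredient module through
  u \<mapsto> B(-, \<phi> u): invariance of B is exactly the intertwining property, and
  the anti-linearity of \<phi> compensates that of B in its second argument.
  Invariance applied to \<omega> makes L(0) symmetric, so distinct weight spaces are
  orthogonal; as they are finite-dimensional and B is positive definite, every
  functional supported on finitely many weight spaces is represented by a vector
  (Riesz on a finite span), which gives bijectivity.
\<close>

locale hermitian_space = vector_space smul
  for smul :: "complex \<Rightarrow> 'v::ab_group_add \<Rightarrow> 'v" +
  fixes B :: "'v \<Rightarrow> 'v \<Rightarrow> complex"
  assumes pos_def_hermitian: "pos_def_hermitian smul B"
begin

lemma add_left: "B (u + v) w = B u w + B v w"
  and scale_left: "B (smul c u) w = c * B u w"
  and cnj_sym: "B v u = cnj (B u v)"
  and positive: "v \<noteq> 0 \<Longrightarrow> Re (B v v) > 0"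
  using pos_def_hermitian unfolding pos_def_hermitian_def by blast+

lemma add_right: "B u (v + w) = B u v + B u w"
  using cnj_sym[of u "v + w"] cnj_sym[of u v] cnj_sym[of u w] by (simp add: add_left)

lemma scale_right: "B u (smul c v) = cnj c * B u v"
  using cnj_sym[of u "smul c v"] cnj_sym[of u v] by (simp add: scale_left)

lemma zero_left: "B 0 w = 0"
  and sum_left: "B (sum d A) w = (\<Sum>j\<in>A. B (d j) w)"
  using additive.zero[of "\<lambda>u. B u w"] additive.sum[of "\<lambda>u. B u w"]
  by (simp_all add: additive_def add_left)

lemma zero_right: "B w 0 = 0"
  and diff_right: "B u (v - w) = B u v - B u w"
  and sum_right: "B w (sum d A) = (\<Sum>j\<in>A. B w (d j))"
  using additive.zero[of "B w"] additive.diff[of "B u"] additive.sum[of "B w"]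
  by (simp_all add: additive_def add_right)

lemma self_eq_0_iff: "B v v = 0 \<longleftrightarrow> v = 0"
  using positive[of v] zero_left by (cases "v = 0") auto

lemma cnj_self: "cnj (B v v) = B v v"
  using cnj_sym[of v v] by (rule sym)

lemma eigenvectors_orthogonal:
  assumes symmetric: "\<And>x y. B (T x) y = B x (T y)"
    and "T u = smul (of_real a) u" and "T v = smul (of_real b) v" and "a \<noteq> b"
  shows "B u v = 0"
proof -
  have "of_real a * B u v = of_real b * B u v"
    using symmetric[of u v] assms(2,3) by (simp add: scale_left scale_right)
  then show ?thesis
    using \<open>a \<noteq> b\<close> by simp
qed

lemma representer_on_span:
  assumes "finite S"
    and "\<And>u v. f (u + v) = f u + f v" and "\<And>c u. f (smul c u) = c * f u"
  shows "\<exists>r\<in>span S. \<forall>s\<in>span S. f s = B s r"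
  using assms
proof (induction S arbitrary: f rule: finite_induct)
  case empty
  then show ?case
    using zero_left additive.zero[of f] by (auto intro!: bexI[of _ 0] simp: additive_def)
next
  case (insert x S)
  interpret f: additive f
    by unfold_locales (rule insert.prems(1))
  obtain r where r: "r \<in> span S" "\<forall>s\<in>span S. f s = B s r"
    using insert.IH insert.prems by blast
  obtain p where p: "p \<in> span S" "\<forall>s\<in>span S. B s x = B s p"
    using insert.IH[of "\<lambda>s. B s x"] add_left scale_left by blast
  \<comment> \<open>Gram--Schmidt: x' is the component of x orthogonal to span S.\<close>
  define x' where "x' = x - p"
  define c where "c = cnj (f x') / B x' x'"
  have x'_orth: "B s x' = 0" if "s \<in> span S" for s
    using p that unfolding x'_def by (simp add: diff_right)
  have x'_orth': "B x' s = 0" if "s \<in> span S" for s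
    using x'_orth[OF that] cnj_sym[of s x'] by simp
  have c: "cnj c * B x' x' = f x'"
    using cnj_self[of x'] self_eq_0_iff[of x'] f.zero zero_right
    by (cases "x' = 0") (simp_all add: c_def field_simps)
  have x'_span: "x' \<in> span (insert x S)"
    unfolding x'_def by (meson span_base span_diff span_mono insertI1 p(1) subset_insertI subsetD)
  show ?case
  proof (intro bexI ballI)
    show "r + smul c x' \<in> span (insert x S)"
      by (meson span_add span_scale span_mono r(1) subset_insertI subsetD x'_span)
    fix y
    assume "y \<in> span (insert x S)"
    then obtain a where "y - smul a x \<in> span S"
      using span_breakdown_eq by blast
    moreover have "y - smul a x' = (y - smul a x) + smul a p"
      by (simp add: x'_def scale_right_diff_distrib)
    ultimately have "y - smul a x' \<in> span S"
      using p(1) by (metis span_add span_scale)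
    then obtain t where t: "t \<in> span S" and y: "y = smul a x' + t"
      by (intro that[of "y - smul a x'"]) simp_all
    have "f y = a * f x' + f t"
      unfolding y using insert.prems by simp
    also have "\<dots> = a * (cnj c * B x' x') + B t r"
      using c r(2) t by simp
    also have "\<dots> = B y (r + smul c x')"
      using x'_orth[OF t] x'_orth'[OF r(1)] unfolding y
      by (simp add: add_left scale_left add_right scale_right algebra_simps)
    finally show "f y = B y (r + smul c x')" .
  qed
qed

end

locale graded_hermitian_space = hermitian_space smul B
  for smul :: "complex \<Rightarrow> 'v::ab_group_add \<Rightarrow> 'v" and B +
  fixes W :: "int \<Rightarrow> 'v set"
  assumes decomposition: "\<And>v. \<exists>K c. finite K \<and> (\<forall>k\<in>K. c k \<in> W k) \<and> v = (\<Sum>k\<in>K. c k)"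
    and finite_dim: "\<And>k. \<exists>S. finite S \<and> W k \<subseteq> span S"
    and orthogonal: "\<And>u v k l. u \<in> W k \<Longrightarrow> v \<in> W l \<Longrightarrow> k \<noteq> l \<Longrightarrow> B u v = 0"
begin

lemma inner_sum_homogeneous:
  assumes "w \<in> W k" "finite A" "\<forall>j\<in>A. d j \<in> W j"
  shows "B w (sum d A) = (if k \<in> A then B w (d k) else 0)"
proof -
  have "B w (sum d A) = (\<Sum>j\<in>A. if k = j then B w (d j) else 0)"
    unfolding sum_right using assms by (intro sum.cong) (auto intro: orthogonal)
  then show ?thesis
    using assms(2) by simp
qed

lemma representer_finite_support:
  "\<exists>K. finite K \<and> (\<forall>k. k \<notin> K \<longrightarrow> (\<forall>v\<in>W k. B v r = 0))"
proof -
  obtain K c where K: "finite K" "\<forall>k\<in>K. c k \<in> W k" "r = (\<Sum>k\<in>K. c k)"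
    using decomposition by blast
  have "B v r = 0" if "k \<notin> K" "v \<in> W k" for k v
    using inner_sum_homogeneous[OF that(2) K(1,2)] that(1) K(3) by simp
  then show ?thesis
    using K(1) by blast
qed

lemma representer_unique:
  assumes "\<And>w. B w r = B w s"
  shows "r = s"
  using assms[of "r - s"] self_eq_0_iff[of "r - s"] by (simp add: diff_right)

lemma riesz_representation:
  assumes add: "\<And>u v. f (u + v) = f u + f v" and scale: "\<And>c u. f (smul c u) = c * f u"
    and "finite K" and support: "\<And>k v. k \<notin> K \<Longrightarrow> v \<in> W k \<Longrightarrow> f v = 0"
  shows "\<exists>r. \<forall>w. f w = B w r"
proof -
  interpret f: additive f
    by unfold_locales (rule add)
  obtain S where S: "\<And>k. finite (S k) \<and> W k \<subseteq> span (S k)"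
    using finite_dim by metis
  have "finite (\<Union>k\<in>K. S k)"
    using \<open>finite K\<close> S by blast
  from representer_on_span[OF this add scale]
  obtain r where r: "\<forall>s\<in>span (\<Union>k\<in>K. S k). f s = B s r"
    by blast
  obtain J d where J: "finite J" "\<forall>j\<in>J. d j \<in> W j" "r = (\<Sum>j\<in>J. d j)"
    using decomposition by blast
  \<comment> \<open>r itself need not vanish off K; its truncation to K represents f everywhere.\<close>
  define r' where "r' = (\<Sum>j\<in>J \<inter> K. d j)"
  have homogeneous: "f w = B w r'" if w: "w \<in> W k" for w k
  proof (cases "k \<in> K")
    case True
    have "w \<in> span (\<Union>k\<in>K. S k)"
      using w True S[of k] span_mono[of "S k" "\<Union>k\<in>K. S k"] by blast
    then have "f w = B w r"
      using r by blast
    also have "\<dots> = B w r'"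
      using inner_sum_homogeneous[OF w] J True by (simp add: r'_def)
    finally show ?thesis .
  next
    case False
    then show ?thesis
      using support w inner_sum_homogeneous[OF w, of "J \<inter> K" d] J by (simp add: r'_def)
  qed
  have "\<forall>w. f w = B w r'"
  proof
    fix w
    obtain M e where M: "finite M" "\<forall>m\<in>M. e m \<in> W m" "w = (\<Sum>m\<in>M. e m)"
      using decomposition by blast
    then show "f w = B w r'"
      using homogeneous by (auto simp: f.sum sum_left intro!: sum.cong)
  qed
  then show ?thesis by blast
qed

lemma bij_betw_representer:
  "bij_betw (\<lambda>r w. B w r) UNIV
     {f. (\<forall>u v. f (u + v) = f u + f v) \<and> (\<forall>c u. f (smul c u) = c * f u)
       \<and> (\<exists>K. finite K \<and> (\<forall>k. k \<notin> K \<longrightarrow> (\<forall>v\<in>W k. f v = 0)))}"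
proof (rule bij_betw_imageI)
  show "inj (\<lambda>r w. B w r)"
    by (rule injI) (metis representer_unique)
  show "range (\<lambda>r w. B w r) = {f. (\<forall>u v. f (u + v) = f u + f v) \<and> (\<forall>c u. f (smul c u) = c * f u)
       \<and> (\<exists>K. finite K \<and> (\<forall>k. k \<notin> K \<longrightarrow> (\<forall>v\<in>W k. f v = 0)))}"
  proof (intro equalityI subsetI)
    show "f \<in> range (\<lambda>r w. B w r)" if f: "f \<in> {f. (\<forall>u v. f (u + v) = f u + f v)
       \<and> (\<forall>c u. f (smul c u) = c * f u) \<and> (\<exists>K. finite K \<and> (\<forall>k. k \<notin> K \<longrightarrow> (\<forall>v\<in>W k. f v = 0)))}"
      for f
    proof -
      obtain K where "\<forall>u v. f (u + v) = f u + f v" "\<forall>c u. f (smul c u) = c * f u" "finite K"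
        "\<forall>k. k \<notin> K \<longrightarrow> (\<forall>v\<in>W k. f v = 0)"
        using f by blast
      then obtain r where "\<forall>w. f w = B w r"
        using riesz_representation[of f K] by blast
      then show ?thesis
        by (auto simp: fun_eq_iff)
    qed
  qed (use representer_finite_support in \<open>auto simp: add_left scale_left\<close>)
qed

end

lemma VOSA_vector_space: "VOSA smul Y vac om \<Longrightarrow> vector_space smul"
  unfolding VOSA_def by (elim conjE)

context
  fixes smul :: "complex \<Rightarrow> 'v::ab_group_add \<Rightarrow> 'v" and Y :: "'v \<Rightarrow> int \<Rightarrow> 'v \<Rightarrow> 'v"
    and vac om :: 'v
  assumes VOSA: "VOSA smul Y vac om"
begin

interpretation vector_space smul
  using VOSA by (rule VOSA_vector_space)

lemma VOSA_Virasoro: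
  "\<exists>cc::complex. \<forall>m n v.
        Lop Y om m (Lop Y om n v) - Lop Y om n (Lop Y om m v)
        = smul (of_int (m - n)) (Lop Y om (m + n) v)
          + (if m + n = 0 then smul ((of_int m ^ 3 - of_int m) / 12 * cc) v else 0)"
  using VOSA unfolding VOSA_def by (elim conjE)

lemma VOSA_weight_decomposition:
  "\<forall>v. \<exists>K c. finite K \<and> (\<forall>k\<in>K. c k \<in> wsp smul Y om k) \<and> v = (\<Sum>k\<in>K. c k)"
  using VOSA unfolding VOSA_def by (elim conjE)

lemma VOSA_weight_space_finite_dim:
  "\<forall>k. \<exists>S. finite S \<and> wsp smul Y om k \<subseteq> module.span smul S"
  using VOSA unfolding VOSA_def by (elim conjE)

lemma VOSA_creation_vanishing: "\<forall>u n. n \<ge> 0 \<longrightarrow> Y u n vac = 0"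
  using VOSA unfolding VOSA_def by (elim conjE)

lemma VOSA_creation: "\<forall>u. Y u (-1) vac = u"
  using VOSA unfolding VOSA_def by (elim conjE)

lemma VOSA_mode_zero: "Y 0 n v = 0" "Y a n 0 = 0"
proof -
  have "\<forall>a b n v. Y (a + b) n v = Y a n v + Y b n v"
    using VOSA unfolding VOSA_def by (elim conjE)
  moreover have "\<forall>a n u v. Y a n (u + v) = Y a n u + Y a n v"
    using VOSA unfolding VOSA_def by (elim conjE)
  ultimately show "Y 0 n v = 0" "Y a n 0 = 0"
    using additive.zero[of "\<lambda>a. Y a n v"] additive.zero[of "Y a n"] by (simp_all add: additive_def)
qed

text \<open>The Virasoro relation applied to the vacuum, with \<omega> = L(-2)\<one>.\<close>

lemma VOSA_L1_conformal: "Lop Y om 1 om = 0"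
  and VOSA_conformal_weight: "om \<in> wsp smul Y om 4"
proof -
  obtain cc where vir: "\<And>m n v. Lop Y om m (Lop Y om n v) - Lop Y om n (Lop Y om m v)
        = smul (of_int (m - n)) (Lop Y om (m + n) v)
          + (if m + n = 0 then smul ((of_int m ^ 3 - of_int m) / 12 * cc) v else 0)"
    using VOSA_Virasoro by blast
  note vac = VOSA_creation_vanishing[rule_format] VOSA_creation[rule_format] VOSA_mode_zero
  show "Lop Y om 1 om = 0"
    using vir[of 1 "-2" vac] vac by (simp add: Lop_def)
  have "Lop Y om 0 om = smul 2 om"
    using vir[of 0 "-2" vac] vac by (simp add: Lop_def)
  then show "om \<in> wsp smul Y om 4"
    by (simp add: wsp_def)
qed

text \<open>Since L(1)\<omega> = 0, only the j = 0 term survives in the opposite vertex operator of \<omega>.\<close>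

lemma VOSA_opp_mode_conformal: "opp_mode smul Y om om 4 1 u = Lop Y om 0 u"
proof -
  have "(Lop Y om 1 ^^ Suc i) om = 0" for i
    using VOSA_L1_conformal VOSA_mode_zero by (induction i) (simp_all add: Lop_def)
  then have "opp_mode smul Y om om 4 1 u = Sum_any (\<lambda>j::nat. if j = 0 then Lop Y om 0 u else 0)"
    unfolding opp_mode_def using VOSA_mode_zero
    by (intro arg_cong[where f = Sum_any]) (auto simp: Lop_def fun_eq_iff gr0_conv_Suc)
  then show ?thesis
    by simp
qed

end

text \<open>Invariance of B applied to \<omega> (fixed by \<phi>) says that L(0) is symmetric.\<close>

lemma unitary_weight_spaces_orthogonal:
  assumes "VOSA smul Y vac om" and "phi om = om" and "hermitian_space smul B"
    and invariant: "\<And>a k n u v. a \<in> wsp smul Y om k \<Longrightarrow>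
              B (opp_mode smul Y om a k n u) v = B u (Y (phi a) n v)"
    and "u \<in> wsp smul Y om k" and "v \<in> wsp smul Y om l" and "k \<noteq> l"
  shows "B u v = 0"
proof (rule hermitian_space.eigenvectors_orthogonal[OF \<open>hermitian_space smul B\<close>])
  show "B (Lop Y om 0 x) y = B x (Lop Y om 0 y)" for x y
    using invariant[OF VOSA_conformal_weight[OF assms(1)], of 1 x y]
      VOSA_opp_mode_conformal[OF assms(1)] \<open>phi om = om\<close>
    by (simp add: Lop_def)
  show "Lop Y om 0 u = smul (of_real (of_int k / 2)) u" "Lop Y om 0 v = smul (of_real (of_int l / 2)) v"
    using assms(5,6) by (simp_all add: wsp_def)
  show "(of_int k / 2 :: real) \<noteq> of_int l / 2"
    using \<open>k \<noteq> l\<close> by simp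
qed

lemma unitary_graded_hermitian_space:
  assumes V: "VOSA smul Y vac om" and "antilinear_involution smul Y vac om phi"
    and "pos_def_hermitian smul B"
    and invariant: "\<And>a k n u v. a \<in> wsp smul Y om k \<Longrightarrow>
              B (opp_mode smul Y om a k n u) v = B u (Y (phi a) n v)"
  shows "graded_hermitian_space smul B (wsp smul Y om)"
proof -
  have "hermitian_space smul B"
    using VOSA_vector_space[OF V] \<open>pos_def_hermitian smul B\<close>
    by (simp add: hermitian_space_def hermitian_space_axioms_def)
  moreover have "phi om = om"
    using \<open>antilinear_involution smul Y vac om phi\<close> by (simp add: antilinear_involution_def)
  ultimately show ?thesis
    using VOSA_weight_decomposition[OF V] VOSA_weight_space_finite_dim[OF V]
      unitary_weight_spaces_orthogonal[OF V _ _ invariant]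
    unfolding graded_hermitian_space_def graded_hermitian_space_axioms_def by blast
qed

theorem mainTheorem2:
  fixes smul :: "complex \<Rightarrow> 'v::ab_group_add \<Rightarrow> 'v"
    and Y :: "'v \<Rightarrow> int \<Rightarrow> 'v \<Rightarrow> 'v"
    and vac om :: 'v
    and phi :: "'v \<Rightarrow> 'v"
  assumes "unitary_VOSA smul Y vac om phi"
  shows "self_dual smul Y om"
proof -
  have V: "VOSA smul Y vac om" and phi: "antilinear_involution smul Y vac om phi"
    using assms unfolding unitary_VOSA_def by blast+
  obtain B where "pos_def_hermitian smul B" and invariant: "\<And>a k n u v. a \<in> wsp smul Y om k \<Longrightarrow>
      B (opp_mode smul Y om a k n u) v = B u (Y (phi a) n v)"
    using assms unfolding unitary_VOSA_def by blast
  interpret graded_hermitian_space smul B "wsp smul Y om"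
    using unitary_graded_hermitian_space[OF V phi \<open>pos_def_hermitian smul B\<close> invariant] .
  have phi_add: "phi (u + v) = phi u + phi v" and phi_scale: "phi (smul c u) = smul (cnj c) (phi u)"
    and phi_phi: "phi (phi u) = u" and phi_Y: "phi (Y a n u) = Y (phi a) n (phi u)" for u v c a n
    using phi by (simp_all add: antilinear_involution_def)
  have "bij phi"
    by (rule o_bij[of phi]) (simp_all add: fun_eq_iff phi_phi)
  define F where "F = (\<lambda>r w. B w r) \<circ> phi"
  show ?thesis
    unfolding self_dual_def
  proof (intro exI conjI allI impI)
    show "bij_betw F UNIV (contragredient smul Y om)"
      unfolding F_def contragredient_def using \<open>bij phi\<close> bij_betw_representer by (rule bij_betw_trans)
    show "F (u + v) w = F u w + F v w" "F (smul c u) w = c * F u w" for u v w c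
      by (simp_all add: F_def phi_add phi_scale add_right scale_right)
    show "F (Y a n u) = contra_mode smul Y om a k n (F u)" if "a \<in> wsp smul Y om k" for a k n u
      using invariant[OF that] by (simp add: F_def contra_mode_def phi_Y)
  qed
qed

end
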